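(* Let $\mathfrak R\subseteq\mathcal F(C)\times\mathcal F(C')$ be a simplicial bisimulation between simplicial models $\mathcal C=(C,\chi,\ell)$ and $\mathcal C'=(C',\chi',\ell')$, and let $\mathfrak R_V\subseteq\mathcal V(C)\times\mathcal V(C')$ be the induced vertex relation: $\mathfrak R_V vv'$ iff there are facets $Y,Y'$ with $\mathfrak R YY'$ and a colour $a$ with $v=Y_a$, $v'=Y'_a$. Then $\mathfrak R_V$ is simplex preserving: for every simplex $X\in C$ all of whose vertices lie in the domain of $\mathfrak R_V$, there is a simplex $X'\in C'$ with $\chi'(X')=\chi(X)$ and $\mathfrak R_V X_aX'_a$ for all $a\in\chi(X)$. Likewise the converse relation $\mathfrak R_V^{-1}$ is simplex preserving from $\mathcal C'$ to $\mathcal C$.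
   Context: Fix a finite set $A$ of agents and pairwise disjoint sets $P_a$ ($a\in A$) of local variables, with $P=\bigcup_{a\in A}P_a$. A simplicial complex $C$ on vertex set $\mathcal V(C)$ is a set of nonempty finite subsets (simplices) of $\mathcal V(C)$ closed under nonempty subsets and containing all singletons; maximal simplices are facets, $\mathcal F(C)$. A simplicial model $\mathcal C=(C,\chi,\ell)$ consists of such $C$, a colouring $\chi:\mathcal V(C)\to A$ such that every facet contains exactly one vertex of each colour, and $\ell:\mathcal V(C)\to\mathcal P(P)$ with $\ell(v)\subseteq P_{\chi(v)}$. For a simplex $X$: $\chi(X)=\{\chi(v):v\in X\}$, $\ell(X)=\bigcup_{v\in X}\ell(v)$, and $X_a$ is the vertex of $X$ of colour $a$. Simplicial bisimulation between $\mathcal C$ and $\mathcal C'$: a nonempty $\mathfrak R\subseteq\mathcal F(C)\times\mathcal F(C')$ such that whenever $\mathfrak R YY'$: (atoms) $\ell(Y)=\ell'(Y')$; (forth) for all $a\in A$ and $Z\in\mathcal F(C)$ with $a\in\chi(Y\cap Z)$ there is $Z'\in\mathcal F(C')$ with $a\in\chi'(Y'\cap Z')$ and $\mathfrak R ZZ'$; (back) for all $a$ and $Z'\in\mathcal F(C')$ with $a\in\chi'(Y'\cap Z')$ there is $Z\in\mathcal F(C)$ with $a\in\chi(Y\cap Z)$ and $\mathfrak R ZZ'$. *)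

theory Defs
  imports Main
begin

definition simplicial_complex :: "'v set \<Rightarrow> 'v set set \<Rightarrow> bool" where
  "simplicial_complex V C \<longleftrightarrow>
     (\<forall>X\<in>C. X \<noteq> {} \<and> finite X \<and> X \<subseteq> V) \<and>
     (\<forall>X\<in>C. \<forall>Y. Y \<noteq> {} \<and> Y \<subseteq> X \<longrightarrow> Y \<in> C) \<and>
     (\<forall>v\<in>V. {v} \<in> C)"

definition facets :: "'v set set \<Rightarrow> 'v set set" where
  "facets C = {X \<in> C. \<forall>Y\<in>C. X \<subseteq> Y \<longrightarrow> Y = X}"

definition simplicial_model ::
  "'a set \<Rightarrow> ('a \<Rightarrow> 'p set) \<Rightarrow> 'v set \<Rightarrow> 'v set set \<Rightarrow> ('v \<Rightarrow> 'a) \<Rightarrow> ('v \<Rightarrow> 'p set) \<Rightarrow> bool" where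
  "simplicial_model A P V C chi ell \<longleftrightarrow>
     simplicial_complex V C \<and>
     (\<forall>v\<in>V. chi v \<in> A) \<and>
     (\<forall>X\<in>facets C. \<forall>a\<in>A. \<exists>!v. v \<in> X \<and> chi v = a) \<and>
     (\<forall>v\<in>V. ell v \<subseteq> P (chi v))"

definition vtx :: "('v \<Rightarrow> 'a) \<Rightarrow> 'v set \<Rightarrow> 'a \<Rightarrow> 'v" where
  "vtx chi X a = (THE v. v \<in> X \<and> chi v = a)"

definition lab :: "('v \<Rightarrow> 'p set) \<Rightarrow> 'v set \<Rightarrow> 'p set" where
  "lab ell X = (\<Union>v\<in>X. ell v)"

definition simplicial_bisim ::
  "'a set \<Rightarrow> 'v set set \<Rightarrow> ('v \<Rightarrow> 'a) \<Rightarrow> ('v \<Rightarrow> 'p set) \<Rightarrow>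
   'w set set \<Rightarrow> ('w \<Rightarrow> 'a) \<Rightarrow> ('w \<Rightarrow> 'p set) \<Rightarrow> ('v set \<times> 'w set) set \<Rightarrow> bool" where
  "simplicial_bisim A C chi ell C' chi' ell' R \<longleftrightarrow>
     R \<noteq> {} \<and> R \<subseteq> facets C \<times> facets C' \<and>
     (\<forall>Y Y'. (Y, Y') \<in> R \<longrightarrow>
        lab ell Y = lab ell' Y' \<and>
        (\<forall>a\<in>A. \<forall>Z\<in>facets C. a \<in> chi ` (Y \<inter> Z) \<longrightarrow>
            (\<exists>Z'\<in>facets C'. a \<in> chi' ` (Y' \<inter> Z') \<and> (Z, Z') \<in> R)) \<and>
        (\<forall>a\<in>A. \<forall>Z'\<in>facets C'. a \<in> chi' ` (Y' \<inter> Z') \<longrightarrow>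
            (\<exists>Z\<in>facets C. a \<in> chi ` (Y \<inter> Z) \<and> (Z, Z') \<in> R)))"

definition vertex_rel ::
  "'a set \<Rightarrow> ('v \<Rightarrow> 'a) \<Rightarrow> ('w \<Rightarrow> 'a) \<Rightarrow> ('v set \<times> 'w set) set \<Rightarrow> ('v \<times> 'w) set" where
  "vertex_rel A chi chi' R =
     {(v, v'). \<exists>Y Y' a. (Y, Y') \<in> R \<and> a \<in> A \<and> v = vtx chi Y a \<and> v' = vtx chi' Y' a}"

definition simplex_preserving ::
  "'v set set \<Rightarrow> ('v \<Rightarrow> 'a) \<Rightarrow> 'w set set \<Rightarrow> ('w \<Rightarrow> 'a) \<Rightarrow> ('v \<times> 'w) set \<Rightarrow> bool" where
  "simplex_preserving C chi C' chi' S \<longleftrightarrow>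
     (\<forall>X\<in>C. X \<subseteq> Domain S \<longrightarrow>
        (\<exists>X'\<in>C'. chi' ` X' = chi ` X \<and>
           (\<forall>a\<in>chi ` X. (vtx chi X a, vtx chi' X' a) \<in> S)))"

end

theory Submission
  imports Defs
begin

text \<open>Every simplex \<open>X\<close> lies in a facet \<open>Y\<close>; one forth step, from a facet witnessing
  that some vertex of \<open>X\<close> lies in the domain of the vertex relation, yields a facet \<open>Y'\<close>
  related to \<open>Y\<close>. The image of \<open>X\<close> is the face of \<open>Y'\<close> spanned by the colours of \<open>X\<close>:
  since facets are injectively coloured, the vertices of \<open>X\<close> and of this face are those
  of \<open>Y\<close> and \<open>Y'\<close> of the same colour, which are related by definition. The converse of a
  bisimulation is a bisimulation, which gives the other direction.\<close>

lemma simplicial_complex_face: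
  assumes "simplicial_complex V C" "X \<in> C" "Y \<noteq> {}" "Y \<subseteq> X"
  shows "Y \<in> C"
  using assms unfolding simplicial_complex_def by blast

lemma simplicial_complex_subset:
  assumes "simplicial_complex V C" "X \<in> C"
  shows "X \<subseteq> V"
  using assms unfolding simplicial_complex_def by blast

lemma simplicial_complex_nonempty:
  assumes "simplicial_complex V C" "X \<in> C"
  shows "X \<noteq> {}"
  using assms unfolding simplicial_complex_def by blast

lemma simplicial_model_complex:
  "simplicial_model A P V C chi ell \<Longrightarrow> simplicial_complex V C"
  unfolding simplicial_model_def by simp

lemma simplicial_model_colour:
  "simplicial_model A P V C chi ell \<Longrightarrow> v \<in> V \<Longrightarrow> chi v \<in> A"
  unfolding simplicial_model_def by simp

lemma simplicial_model_facet_colour: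
  "simplicial_model A P V C chi ell \<Longrightarrow> Y \<in> facets C \<Longrightarrow> a \<in> A \<Longrightarrow>
    \<exists>!v. v \<in> Y \<and> chi v = a"
  unfolding simplicial_model_def by simp

lemma facets_subset: "facets C \<subseteq> C"
  unfolding facets_def by blast

lemma vtx_eq:
  assumes "inj_on chi X" "v \<in> X"
  shows "vtx chi X (chi v) = v"
  unfolding vtx_def using assms by (blast dest: inj_onD)

lemma vtx_in_facet:
  assumes "simplicial_model A P V C chi ell" "Y \<in> facets C" "a \<in> A"
  shows "vtx chi Y a \<in> Y" "chi (vtx chi Y a) = a"
proof -
  have "\<exists>!v. v \<in> Y \<and> chi v = a"
    using assms by (rule simplicial_model_facet_colour)
  then have "vtx chi Y a \<in> Y \<and> chi (vtx chi Y a) = a"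
    unfolding vtx_def by (rule theI')
  then show "vtx chi Y a \<in> Y" "chi (vtx chi Y a) = a" by blast+
qed

lemma inj_on_facet:
  assumes sm: "simplicial_model A P V C chi ell" and Y: "Y \<in> facets C"
  shows "inj_on chi Y"
proof (rule inj_onI)
  fix u w assume u: "u \<in> Y" and w: "w \<in> Y" and "chi u = chi w"
  have "Y \<subseteq> V"
    using simplicial_model_complex[OF sm] subsetD[OF facets_subset Y]
    by (rule simplicial_complex_subset)
  then have "chi u \<in> A" using sm u by (blast intro: simplicial_model_colour)
  then have unique: "\<exists>!v. v \<in> Y \<and> chi v = chi u"
    using sm Y by (intro simplicial_model_facet_colour)
  show "u = w"
    using the1_equality[OF unique, of u] the1_equality[OF unique, of w] u w \<open>chi u = chi w\<close>
    by simp
qed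

lemma vtx_face_of_facet:
  assumes sm: "simplicial_model A P V C chi ell" and Y: "Y \<in> facets C"
    and "X \<subseteq> Y" "a \<in> chi ` X"
  shows "vtx chi X a = vtx chi Y a"
proof -
  obtain v where v: "v \<in> X" "a = chi v" using \<open>a \<in> chi ` X\<close> by blast
  have inj: "inj_on chi Y" using sm Y by (rule inj_on_facet)
  have "vtx chi X (chi v) = v"
    using inj_on_subset[OF inj \<open>X \<subseteq> Y\<close>] v(1) by (rule vtx_eq)
  moreover have "vtx chi Y (chi v) = v"
    using inj by (rule vtx_eq) (use v(1) \<open>X \<subseteq> Y\<close> in blast)
  ultimately show ?thesis using v(2) by simp
qed

lemma facet_face_of_colours:
  assumes sm: "simplicial_model A P V C chi ell" and Y: "Y \<in> facets C"
    and "B \<subseteq> A" "B \<noteq> {}"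
  shows "vtx chi Y ` B \<in> C" "chi ` vtx chi Y ` B = B"
    and "\<And>a. a \<in> B \<Longrightarrow> vtx chi (vtx chi Y ` B) a = vtx chi Y a"
proof -
  have sub: "vtx chi Y ` B \<subseteq> Y" and col: "\<And>a. a \<in> B \<Longrightarrow> chi (vtx chi Y a) = a"
    using vtx_in_facet[OF sm Y] \<open>B \<subseteq> A\<close> by blast+
  have "simplicial_complex V C" using sm by (rule simplicial_model_complex)
  then show "vtx chi Y ` B \<in> C"
    using subsetD[OF facets_subset Y] _ sub by (rule simplicial_complex_face) (use \<open>B \<noteq> {}\<close> in simp)
  show colours: "chi ` vtx chi Y ` B = B"
    using col by (simp add: image_image)
  show "vtx chi (vtx chi Y ` B) a = vtx chi Y a" if "a \<in> B" for a
    using vtx_face_of_facet[OF sm Y sub] that by (simp add: colours)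
qed

lemma simplicial_bisim_facets:
  assumes "simplicial_bisim A C chi ell C' chi' ell' R" "(Y, Y') \<in> R"
  shows "Y \<in> facets C" "Y' \<in> facets C'"
  using assms unfolding simplicial_bisim_def by blast+

lemma simplicial_bisim_forth:
  assumes "simplicial_bisim A C chi ell C' chi' ell' R" "(Y, Y') \<in> R"
    and "a \<in> A" "Z \<in> facets C" "a \<in> chi ` (Y \<inter> Z)"
  obtains Z' where "Z' \<in> facets C'" "a \<in> chi' ` (Y' \<inter> Z')" "(Z, Z') \<in> R"
  using assms unfolding simplicial_bisim_def by meson

lemma simplicial_bisim_related_facet:
  assumes sm: "simplicial_model A P V C chi ell"
    and bis: "simplicial_bisim A C chi ell C' chi' ell' R"
    and v: "v \<in> Domain (vertex_rel A chi chi' R)" and Y: "Y \<in> facets C" "v \<in> Y"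
  obtains Y' where "(Y, Y') \<in> R"
proof -
  obtain Z Z' b where Z: "(Z, Z') \<in> R" "b \<in> A" "v = vtx chi Z b"
    using v unfolding vertex_rel_def by blast
  have "Z \<in> facets C" using bis Z(1) by (rule simplicial_bisim_facets)
  then have "v \<in> Z" "chi v = b"
    using vtx_in_facet[OF sm _ Z(2)] Z(3) by simp_all
  then have "b \<in> chi ` (Z \<inter> Y)" using Y(2) by blast
  then show thesis
    using simplicial_bisim_forth[OF bis Z(1,2) Y(1)] that by blast
qed

lemma simplex_preserving_vertex_rel:
  assumes sm: "simplicial_model A P V C chi ell"
    and sm': "simplicial_model A P V' C' chi' ell'"
    and cover: "\<forall>X\<in>C. \<exists>Y\<in>facets C. X \<subseteq> Y"
    and bis: "simplicial_bisim A C chi ell C' chi' ell' R"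
  shows "simplex_preserving C chi C' chi' (vertex_rel A chi chi' R)"
  unfolding simplex_preserving_def
proof (intro ballI impI)
  fix X assume X: "X \<in> C" and dom: "X \<subseteq> Domain (vertex_rel A chi chi' R)"
  have sc: "simplicial_complex V C" using sm by (rule simplicial_model_complex)
  have "X \<noteq> {}" using sc X by (rule simplicial_complex_nonempty)
  then obtain v where "v \<in> X" by blast
  obtain Y where Y: "Y \<in> facets C" "X \<subseteq> Y" using cover X by blast
  obtain Y' where YY': "(Y, Y') \<in> R"
    using simplicial_bisim_related_facet[OF sm bis] dom Y \<open>v \<in> X\<close> by blast
  have Y': "Y' \<in> facets C'" using bis YY' by (rule simplicial_bisim_facets)
  have colours: "chi ` X \<subseteq> A"
    using simplicial_complex_subset[OF sc X] simplicial_model_colour[OF sm] by blast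
  define X' where "X' = vtx chi' Y' ` chi ` X"
  note face = facet_face_of_colours[OF sm' Y' colours, folded X'_def]
  have "(vtx chi X a, vtx chi' X' a) \<in> vertex_rel A chi chi' R" if "a \<in> chi ` X" for a
    using vtx_face_of_facet[OF sm Y(1,2) that] face(3)[OF _ that] YY' colours that
    unfolding vertex_rel_def by blast
  then show "\<exists>X'\<in>C'. chi' ` X' = chi ` X \<and>
      (\<forall>a\<in>chi ` X. (vtx chi X a, vtx chi' X' a) \<in> vertex_rel A chi chi' R)"
    using face(1,2) \<open>X \<noteq> {}\<close> by blast
qed

lemma simplicial_bisim_converse:
  assumes "simplicial_bisim A C chi ell C' chi' ell' R"
  shows "simplicial_bisim A C' chi' ell' C chi ell (R\<inverse>)"
  using assms unfolding simplicial_bisim_def by (auto 0 4)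

lemma vertex_rel_converse: "vertex_rel A chi' chi (R\<inverse>) = (vertex_rel A chi chi' R)\<inverse>"
  unfolding vertex_rel_def by auto

theorem mainTheorem5:
  fixes A :: "'a set" and P :: "'a \<Rightarrow> 'p set"
    and V :: "'v set" and C :: "'v set set" and chi :: "'v \<Rightarrow> 'a" and ell :: "'v \<Rightarrow> 'p set"
    and V' :: "'w set" and C' :: "'w set set" and chi' :: "'w \<Rightarrow> 'a" and ell' :: "'w \<Rightarrow> 'p set"
    and R :: "('v set \<times> 'w set) set"
  assumes "finite A"
    and "\<forall>a\<in>A. \<forall>b\<in>A. a \<noteq> b \<longrightarrow> P a \<inter> P b = {}"
    and "simplicial_model A P V C chi ell"
    and "simplicial_model A P V' C' chi' ell'"
    and "\<forall>X\<in>C. \<exists>Y\<in>facets C. X \<subseteq> Y"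
    and "\<forall>X'\<in>C'. \<exists>Y'\<in>facets C'. X' \<subseteq> Y'"
    and "simplicial_bisim A C chi ell C' chi' ell' R"
  shows "simplex_preserving C chi C' chi' (vertex_rel A chi chi' R) \<and>
         simplex_preserving C' chi' C chi ((vertex_rel A chi chi' R)\<inverse>)"
  using simplex_preserving_vertex_rel[OF assms(3,4,5,7)]
    simplex_preserving_vertex_rel[OF assms(4,3,6) simplicial_bisim_converse[OF assms(7)]]
  by (simp add: vertex_rel_converse)

end
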